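(* Let $(X,d)$ be a compact metric space and $f:X\to X$ continuous. Suppose (1) there is $(z,w)\in CR(f)^2$ with $z\sim w$ and such that $(z,w)$ has property*; and (2) for every sequence $(x_i)_{i\ge0}$ of points of $CR(f)$ with $\lim_{i\to\infty}d(f(x_i),x_{i+1})=0$ there is $x\in X$ with $\lim_{n\to\infty}\frac1n\sum_{i=0}^{n-1}d(f^i(x),x_i)=0$. Then $f$ exhibits DC1.
   Context: A $\delta$-chain of $f$ is a finite sequence $(x_i)_{i=0}^k$, $k\ge1$, with $d(f(x_i),x_{i+1})\le\delta$ for $0\le i<k$; a $\delta$-cycle is a $\delta$-chain with $x_0=x_k$. $CR(f)$ is the set of points $x$ such that for every $\delta>0$ there is a $\delta$-cycle starting and ending at $x$. For $x,y\in CR(f)$, $x\sim y$ iff for every $\delta>0$ there are integers $m>0$, $N>0$ such that for every $n\ge N$ there are $\delta$-chains $(x_i)_{i=0}^{mn},(y_i)_{i=0}^{mn}$ in $CR(f)$ with $x_0=y_{mn}=x$, $x_{mn}=y_0=y$. A pair $(x,y)\in CR(f)^2$ has property* if there is $r>0$ such that for every $\delta>0$ there are $\delta$-cycles $(x_i)_{i=0}^k,(y_i)_{i=0}^k$ of $f$ in $CR(f)$ (same length $k$) with $x_0=x_k=x$, $y_0=y_k=y$ and $d(x_i,y_i)>r$ for all $0\le i\le k$. A pair $(x,y)$ is a DC1-pair if $\limsup_{n}\frac1n|\{0\le i<n: d(f^i(x),f^i(y))<\delta\}|=1$ for all $\delta>0$ and $\limsup_{n}\frac1n|\{0\le i<n: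 d(f^i(x),f^i(y))>\delta_0\}|=1$ for some $\delta_0>0$; $f$ exhibits DC1 if there is an uncountable $S\subset X$ any two distinct points of which form a DC1-pair. *)

theory Defs
  imports "HOL-Analysis.Analysis" "HOL-Library.Liminf_Limsup"
begin

definition delta_chain :: "('a::metric_space \<Rightarrow> 'a) \<Rightarrow> real \<Rightarrow> (nat \<Rightarrow> 'a) \<Rightarrow> nat \<Rightarrow> bool" where
  "delta_chain f \<delta> xs k \<longleftrightarrow> k \<ge> 1 \<and> (\<forall>i<k. dist (f (xs i)) (xs (Suc i)) \<le> \<delta>)"

definition chain_recurrent_set :: "('a::metric_space \<Rightarrow> 'a) \<Rightarrow> 'a set" where
  "chain_recurrent_set f = {x. \<forall>\<delta>>0. \<exists>xs k. delta_chain f \<delta> xs k \<and> xs 0 = x \<and> xs k = x}"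

definition CR_rel :: "('a::metric_space \<Rightarrow> 'a) \<Rightarrow> 'a \<Rightarrow> 'a \<Rightarrow> bool" where
  "CR_rel f x y \<longleftrightarrow> x \<in> chain_recurrent_set f \<and> y \<in> chain_recurrent_set f \<and>
     (\<forall>\<delta>>0. \<exists>m>0. \<exists>N>0. \<forall>n\<ge>N. \<exists>xs ys.
        delta_chain f \<delta> xs (m*n) \<and> delta_chain f \<delta> ys (m*n) \<and>
        (\<forall>i\<le>m*n. xs i \<in> chain_recurrent_set f \<and> ys i \<in> chain_recurrent_set f) \<and>
        xs 0 = x \<and> xs (m*n) = y \<and> ys 0 = y \<and> ys (m*n) = x)"

definition property_star :: "('a::metric_space \<Rightarrow> 'a) \<Rightarrow> 'a \<Rightarrow> 'a \<Rightarrow> bool" where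
  "property_star f x y \<longleftrightarrow> x \<in> chain_recurrent_set f \<and> y \<in> chain_recurrent_set f \<and>
     (\<exists>r>0. \<forall>\<delta>>0. \<exists>k xs ys.
        delta_chain f \<delta> xs k \<and> delta_chain f \<delta> ys k \<and>
        (\<forall>i\<le>k. xs i \<in> chain_recurrent_set f \<and> ys i \<in> chain_recurrent_set f) \<and>
        xs 0 = x \<and> xs k = x \<and> ys 0 = y \<and> ys k = y \<and>
        (\<forall>i\<le>k. dist (xs i) (ys i) > r))"

definition DC1_pair :: "('a::metric_space \<Rightarrow> 'a) \<Rightarrow> 'a \<Rightarrow> 'a \<Rightarrow> bool" where
  "DC1_pair f x y \<longleftrightarrow>
     (\<forall>\<delta>>0. limsup (\<lambda>n. ereal (real (card {i. i < n \<and> dist ((f^^i) x) ((f^^i) y) < \<delta>}) / real n)) = 1) \<and>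
     (\<exists>\<delta>0>0. limsup (\<lambda>n. ereal (real (card {i. i < n \<and> dist ((f^^i) x) ((f^^i) y) > \<delta>0}) / real n)) = 1)"

definition exhibits_DC1 :: "('a::metric_space \<Rightarrow> 'a) \<Rightarrow> bool" where
  "exhibits_DC1 f \<longleftrightarrow> (\<exists>S. uncountable S \<and> (\<forall>x\<in>S. \<forall>y\<in>S. x \<noteq> y \<longrightarrow> DC1_pair f x y))"

end

theory Submission
  imports Defs
begin

text \<open>Property* gives, for every j, a z-cycle and a w-cycle of equal length that are
  1/(j+1)-chains staying r apart, and z \<sim> w gives 1/(j+1)-chains from z to w and back whose
  length is a multiple of that cycle length. For a bit sequence s we concatenate blocks
  j = 0, 1, ...: block j runs around the z-cycle, except that when its bit is set it first
  travels to w, winds around the w-cycle and travels back. Each dwell dominates the total length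
  of everything before it, so two different sequences coincide on a fraction at least
  1 - 1/(j+1) of the time up to the end of block j, and, whenever their bits differ in block j,
  they are r apart on a fraction at least 1 - 1/(j+1) of the time up to the end of the w-dwell.
  These pseudo-orbits lie in CR(f) with errors tending to 0, so hypothesis (2) yields points whose
  orbits follow them up to an error of Cesaro mean 0, hence outside a set of density 0. The points
  obtained from all bit sequences form an uncountable DC1-scrambled set.\<close>

lemma uncountable_UNIV_nat_bool: "uncountable (UNIV :: (nat \<Rightarrow> bool) set)"
proof
  assume "countable (UNIV :: (nat \<Rightarrow> bool) set)"
  then obtain g :: "nat \<Rightarrow> nat \<Rightarrow> bool" where "range g = UNIV"
    using uncountable_def by blast
  then obtain n where "g n = (\<lambda>i. \<not> g i i)" by (metis UNIV_I rangeE)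
  from fun_cong[OF this, of n] show False by simp
qed

section \<open>Sets of upper density one\<close>

definition upper_density_one :: "(nat \<Rightarrow> bool) \<Rightarrow> bool" where
  "upper_density_one Q \<longleftrightarrow>
     (\<forall>\<epsilon>>0. \<forall>N. \<exists>n\<ge>N. 1 - \<epsilon> \<le> real (card {i. i < n \<and> Q i}) / real n)"

lemma density_le_1: "real (card {i. i < n \<and> Q i}) / real n \<le> 1"
proof (cases "n = 0")
  case False
  have "card {i. i < n \<and> Q i} \<le> card {..<n}" by (intro card_mono) auto
  then show ?thesis using False by simp
qed simp

lemma limsup_density_eq_1:
  assumes "upper_density_one Q"
  shows "limsup (\<lambda>n. ereal (real (card {i. i < n \<and> Q i}) / real n)) = 1"
    (is "limsup ?u = 1")
proof (rule antisym)
  show "limsup ?u \<le> 1"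
    by (rule Limsup_bounded) (simp add: density_le_1)
  show "1 \<le> limsup ?u"
  proof (rule ccontr)
    assume "\<not> 1 \<le> limsup ?u"
    then have "limsup ?u < 1" by simp
    from ereal_dense2[OF this] obtain y where y: "limsup ?u < ereal y" "y < 1" by auto
    from Limsup_lessD[OF y(1)] obtain N where N: "\<And>n. n \<ge> N \<Longrightarrow> ?u n < ereal y"
      unfolding eventually_sequentially by blast
    have "1 - y > 0" using y(2) by simp
    with assms obtain n where "n \<ge> N" "1 - (1 - y) \<le> real (card {i. i < n \<and> Q i}) / real n"
      unfolding upper_density_one_def by blast
    with N show False by force
  qed
qed

lemma upper_density_oneE:
  assumes "upper_density_one Q"
  obtains i where "Q i"
proof -
  obtain n where "1 - 1/2 \<le> real (card {i. i < n \<and> Q i}) / real n"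
    using assms unfolding upper_density_one_def by (meson half_gt_zero zero_less_one)
  then have "card {i. i < n \<and> Q i} \<noteq> 0" by (intro notI) simp
  then show ?thesis using that by (metis (mono_tags, lifting) Collect_empty_eq card.empty)
qed

lemma upper_density_oneI_intervals:
  assumes "\<And>N. \<exists>m n. N \<le> n \<and> N * m \<le> n \<and> (\<forall>i. m \<le> i \<and> i < n \<longrightarrow> Q i)"
  shows "upper_density_one Q"
  unfolding upper_density_one_def
proof (intro allI impI)
  fix \<epsilon> :: real and N0 assume "\<epsilon> > 0"
  then obtain l where l: "inverse (real (Suc l)) < \<epsilon>"
    using reals_Archimedean by blast
  define N where "N = max N0 (Suc l)"
  obtain m n where n: "N \<le> n" "N * m \<le> n" and Q: "\<And>i. m \<le> i \<Longrightarrow> i < n \<Longrightarrow> Q i"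
    using assms by blast
  have "{m..<n} \<subseteq> {i. i < n \<and> Q i}" using Q by auto
  then have "n - m \<le> card {i. i < n \<and> Q i}"
    by (metis card_atLeastLessThan card_mono finite_Collect_conjI finite_Collect_less_nat)
  then have "real n - real m \<le> real (card {i. i < n \<and> Q i})"
    by (cases "m \<le> n") (auto simp: of_nat_diff)
  moreover have "real m \<le> real n * \<epsilon>"
  proof -
    have "real (Suc l) * real m \<le> real N * real m"
      by (intro mult_right_mono) (auto simp: N_def)
    also have "\<dots> \<le> real n" using n(2) by (metis of_nat_le_iff of_nat_mult)
    finally have "real m \<le> real n * inverse (real (Suc l))" by (simp add: field_simps)
    also have "\<dots> \<le> real n * \<epsilon>" using l by (intro mult_left_mono) auto
    finally show ?thesis .
  qed
  moreover have "n > 0" using n(1) by (simp add: N_def)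
  ultimately have "1 - \<epsilon> \<le> 1 - real m / real n"
    by (simp add: divide_le_eq mult.commute)
  also have "\<dots> = (real n - real m) / real n" using \<open>n > 0\<close> by (simp add: field_simps)
  also have "\<dots> \<le> real (card {i. i < n \<and> Q i}) / real n"
    using \<open>real n - real m \<le> _\<close> by (simp add: divide_right_mono)
  finally have "1 - \<epsilon> \<le> real (card {i. i < n \<and> Q i}) / real n" .
  then show "\<exists>n\<ge>N0. 1 - \<epsilon> \<le> real (card {i. i < n \<and> Q i}) / real n"
    using n(1) by (auto simp: N_def)
qed

lemma density_tendsto_0_if_cesaro_tendsto_0:
  fixes e :: "nat \<Rightarrow> real"
  assumes nonneg: "\<And>i. e i \<ge> 0"
    and cesaro: "(\<lambda>n. (\<Sum>i<n. e i) / real n) \<longlonglongrightarrow> 0"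
    and "\<eta> > 0"
  shows "(\<lambda>n. real (card {i. i < n \<and> \<eta> \<le> e i}) / real n) \<longlonglongrightarrow> 0"
proof (rule tendsto_sandwich[of "\<lambda>n. 0" _ _ "\<lambda>n. (\<Sum>i<n. e i) / real n / \<eta>"])
  have "real (card {i. i < n \<and> \<eta> \<le> e i}) / real n \<le> (\<Sum>i<n. e i) / real n / \<eta>" for n
  proof -
    have "real (card {i. i < n \<and> \<eta> \<le> e i}) * \<eta> = (\<Sum>i\<in>{i. i < n \<and> \<eta> \<le> e i}. \<eta>)"
      by simp
    also have "\<dots> \<le> (\<Sum>i\<in>{i. i < n \<and> \<eta> \<le> e i}. e i)" by (rule sum_mono) auto
    also have "\<dots> \<le> (\<Sum>i<n. e i)" by (rule sum_mono2) (auto simp: nonneg)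
    finally have "real (card {i. i < n \<and> \<eta> \<le> e i}) * \<eta> / real n \<le> (\<Sum>i<n. e i) / real n"
      by (rule divide_right_mono) simp
    then show ?thesis using \<open>\<eta> > 0\<close> by (subst pos_le_divide_eq) (simp_all add: mult.commute)
  qed
  then show "\<forall>\<^sub>F n in sequentially.
      real (card {i. i < n \<and> \<eta> \<le> e i}) / real n \<le> (\<Sum>i<n. e i) / real n / \<eta>"
    by simp
  show "(\<lambda>n. (\<Sum>i<n. e i) / real n / \<eta>) \<longlonglongrightarrow> 0"
    using tendsto_divide[OF cesaro tendsto_const[of \<eta>]] \<open>\<eta> > 0\<close> by simp
qed auto

text \<open>The Cesaro-small error e is at least \<eta> only on a set of density zero, and outside
  that set Q forces R.\<close>
lemma upper_density_one_transfer:
  fixes e :: "nat \<Rightarrow> real"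
  assumes Q: "upper_density_one Q"
    and nonneg: "\<And>i. e i \<ge> 0"
    and cesaro: "(\<lambda>n. (\<Sum>i<n. e i) / real n) \<longlonglongrightarrow> 0"
    and "\<eta> > 0"
    and QR: "\<And>i. Q i \<Longrightarrow> e i < \<eta> \<Longrightarrow> R i"
  shows "upper_density_one R"
  unfolding upper_density_one_def
proof (intro allI impI)
  fix \<epsilon> :: real and N assume "\<epsilon> > 0"
  let ?density = "\<lambda>P n. real (card {i. i < n \<and> P i}) / real n"
  have "\<epsilon>/2 > 0" using \<open>\<epsilon> > 0\<close> by simp
  from order_tendstoD(2)[OF density_tendsto_0_if_cesaro_tendsto_0[OF nonneg cesaro \<open>\<eta> > 0\<close>] this]
  have "eventually (\<lambda>n. ?density (\<lambda>i. \<eta> \<le> e i) n < \<epsilon>/2) sequentially" .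
  then obtain N1 where N1: "\<And>n. n \<ge> N1 \<Longrightarrow> ?density (\<lambda>i. \<eta> \<le> e i) n < \<epsilon>/2"
    unfolding eventually_sequentially by blast
  from Q[unfolded upper_density_one_def, rule_format, OF \<open>\<epsilon>/2 > 0\<close>, of "max N N1"]
  obtain n where n: "n \<ge> N" "n \<ge> N1" "1 - \<epsilon>/2 \<le> ?density Q n" by auto
  have "{i. i < n \<and> Q i} \<subseteq> {i. i < n \<and> R i} \<union> {i. i < n \<and> \<eta> \<le> e i}"
    using QR by (auto simp: not_le)
  then have "card {i. i < n \<and> Q i} \<le> card ({i. i < n \<and> R i} \<union> {i. i < n \<and> \<eta> \<le> e i})"
    by (rule card_mono[rotated]) simp
  also have "\<dots> \<le> card {i. i < n \<and> R i} + card {i. i < n \<and> \<eta> \<le> e i}"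
    by (rule card_Un_le)
  finally have "?density Q n \<le> ?density R n + ?density (\<lambda>i. \<eta> \<le> e i) n"
    by (simp add: divide_right_mono flip: add_divide_distrib)
  then have "1 - \<epsilon> \<le> ?density R n" using n(3) N1[OF n(2)] by linarith
  with n(1) show "\<exists>n\<ge>N. 1 - \<epsilon> \<le> ?density R n" by blast
qed

section \<open>Concatenation of chains\<close>

definition segment_index :: "(nat \<Rightarrow> nat) \<Rightarrow> nat \<Rightarrow> nat" where
  "segment_index P i = (LEAST j. i < P (Suc j))"

lemma segment_index_bounds:
  assumes "strict_mono P" "P 0 = 0"
  shows "P (segment_index P i) \<le> i" "i < P (Suc (segment_index P i))"
proof -
  have "i < P (Suc i)"
    using strict_mono_imp_increasing[OF assms(1), of "Suc i"] by simp
  then show "i < P (Suc (segment_index P i))"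
    unfolding segment_index_def by (rule LeastI)
  show "P (segment_index P i) \<le> i"
  proof (cases "segment_index P i")
    case (Suc j)
    then have "\<not> i < P (Suc j)"
      unfolding segment_index_def by (metis lessI not_less_Least)
    with Suc show ?thesis by simp
  qed (simp add: assms(2))
qed

lemma segment_index_eq:
  assumes "strict_mono P" "P j \<le> i" "i < P (Suc j)"
  shows "segment_index P i = j"
  unfolding segment_index_def
proof (rule Least_equality)
  show "j \<le> l" if "i < P (Suc l)" for l
  proof (rule ccontr)
    assume "\<not> j \<le> l"
    then have "P (Suc l) \<le> P j" using assms(1) by (simp add: strict_mono_less_eq)
    with that assms(2) show False by simp
  qed
qed (use assms in simp)

lemma filterlim_segment_index:
  assumes "strict_mono P" "P 0 = 0"
  shows "filterlim (segment_index P) at_top sequentially"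
  unfolding filterlim_at_top eventually_sequentially
proof (intro allI exI impI)
  fix J i assume "P J \<le> i"
  show "J \<le> segment_index P i"
  proof (rule ccontr)
    assume "\<not> J \<le> segment_index P i"
    then have "P (Suc (segment_index P i)) \<le> P J"
      using assms(1) by (simp add: strict_mono_less_eq)
    with segment_index_bounds(2)[OF assms, of i] \<open>P J \<le> i\<close> show False by simp
  qed
qed

definition concat_segments :: "(nat \<Rightarrow> nat) \<Rightarrow> (nat \<Rightarrow> nat \<Rightarrow> 'a) \<Rightarrow> nat \<Rightarrow> 'a" where
  "concat_segments P W i = W (segment_index P i) (i - P (segment_index P i))"

lemma concat_segments_at:
  assumes "strict_mono P" "t < P (Suc j) - P j"
  shows "concat_segments P W (P j + t) = W j t"
proof -
  have "segment_index P (P j + t) = j"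
    using assms by (intro segment_index_eq) auto
  then show ?thesis by (simp add: concat_segments_def)
qed

lemma concat_segments_step:
  fixes f :: "'a::metric_space \<Rightarrow> 'a"
  assumes P: "strict_mono P" "P 0 = 0"
    and step: "\<And>j t. t < P (Suc j) - P j \<Longrightarrow> dist (f (W j t)) (W j (Suc t)) \<le> \<delta> j"
    and glue: "\<And>j. W j (P (Suc j) - P j) = W (Suc j) 0"
  shows "dist (f (concat_segments P W i)) (concat_segments P W (Suc i)) \<le> \<delta> (segment_index P i)"
proof -
  define j where "j = segment_index P i"
  define t where "t = i - P j"
  have t: "t < P (Suc j) - P j" and i: "i = P j + t"
    using segment_index_bounds[OF P, of i] by (auto simp: j_def t_def)
  have "concat_segments P W (Suc i) = W j (Suc t)"
  proof (cases "Suc t < P (Suc j) - P j")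
    case True
    then show ?thesis using concat_segments_at[OF P(1) True] i by simp
  next
    case False
    then have "Suc i = P (Suc j) + 0" "Suc t = P (Suc j) - P j" using t i by auto
    moreover have "0 < P (Suc (Suc j)) - P (Suc j)"
      using P(1) by (simp add: strict_mono_def)
    ultimately show ?thesis using concat_segments_at[OF P(1)] glue by metis
  qed
  moreover have "concat_segments P W i = W j t"
    using concat_segments_at[OF P(1) t] i by simp
  ultimately show ?thesis using step[OF t] by (simp add: j_def)
qed

lemma concat_segments_pseudo_orbit:
  fixes f :: "'a::metric_space \<Rightarrow> 'a"
  assumes P: "strict_mono P" "P 0 = 0"
    and step: "\<And>j t. t < P (Suc j) - P j \<Longrightarrow> dist (f (W j t)) (W j (Suc t)) \<le> \<delta> j"
    and glue: "\<And>j. W j (P (Suc j) - P j) = W (Suc j) 0"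
    and "\<delta> \<longlonglongrightarrow> 0"
  shows "(\<lambda>i. dist (f (concat_segments P W i)) (concat_segments P W (Suc i))) \<longlonglongrightarrow> 0"
proof (rule tendsto_sandwich[of "\<lambda>i. 0" _ _ "\<lambda>i. \<delta> (segment_index P i)"])
  show "(\<lambda>i. \<delta> (segment_index P i)) \<longlonglongrightarrow> 0"
    using filterlim_compose[OF \<open>\<delta> \<longlonglongrightarrow> 0\<close> filterlim_segment_index[OF P]] .
qed (use concat_segments_step[OF P step glue] in auto)

lemma cycle_step:
  fixes f :: "'a::metric_space \<Rightarrow> 'a"
  assumes "delta_chain f \<delta> C k" "C k = C 0"
  shows "dist (f (C (t mod k))) (C (Suc t mod k)) \<le> \<delta>"
proof -
  have "t mod k < k" using assms(1) by (simp add: delta_chain_def)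
  moreover have "C (Suc t mod k) = C (Suc (t mod k))"
    using calculation assms(2) by (auto simp: mod_Suc)
  ultimately show ?thesis using assms(1) by (simp add: delta_chain_def)
qed

section \<open>Pseudo-orbits coding bit sequences\<close>

locale coding_data =
  fixes f :: "'a::metric_space \<Rightarrow> 'a" and z w :: 'a and r :: real
    and k M :: "nat \<Rightarrow> nat" and X Y Zw Wz :: "nat \<Rightarrow> nat \<Rightarrow> 'a"
  assumes r_pos: "r > 0"
    and cycles: "delta_chain f (inverse (real (Suc j))) (X j) (k j)"
      "delta_chain f (inverse (real (Suc j))) (Y j) (k j)"
      "X j 0 = z" "X j (k j) = z" "Y j 0 = w" "Y j (k j) = w"
    and cycles_apart: "i \<le> k j \<Longrightarrow> r < dist (X j i) (Y j i)"
    and connections: "delta_chain f (inverse (real (Suc j))) (Zw j) (M j)"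
      "delta_chain f (inverse (real (Suc j))) (Wz j) (M j)"
      "Zw j 0 = z" "Zw j (M j) = w" "Wz j 0 = w" "Wz j (M j) = z"
    and k_dvd_M: "k j dvd M j"
    and in_CR: "i \<le> k j \<Longrightarrow> X j i \<in> chain_recurrent_set f"
      "i \<le> k j \<Longrightarrow> Y j i \<in> chain_recurrent_set f"
      "i \<le> M j \<Longrightarrow> Zw j i \<in> chain_recurrent_set f"
      "i \<le> M j \<Longrightarrow> Wz j i \<in> chain_recurrent_set f"
begin

lemma k_pos: "0 < k j" and M_pos: "0 < M j"
  using cycles(1)[of j] connections(1)[of j] by (auto simp: delta_chain_def)

text \<open>Each dwell
  lasts j + 1 times everything before it, and all lengths are multiples of k j, so that the two
  cycles are traversed in phase.\<close>

primrec block_start :: "nat \<Rightarrow> nat" where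
  "block_start 0 = 0"
| "block_start (Suc j) =
     (let D = Suc j * (block_start j + M j) * k j
      in block_start j + 2 * M j + D + Suc j * (block_start j + 2 * M j + D) * k j)"

definition dwell_w :: "nat \<Rightarrow> nat" where
  "dwell_w j = Suc j * (block_start j + M j) * k j"

definition dwell_z :: "nat \<Rightarrow> nat" where
  "dwell_z j = Suc j * (block_start j + 2 * M j + dwell_w j) * k j"

definition block_len :: "nat \<Rightarrow> nat" where
  "block_len j = 2 * M j + dwell_w j + dwell_z j"

lemma block_start_Suc: "block_start (Suc j) = block_start j + block_len j"
  by (simp add: block_len_def dwell_z_def dwell_w_def Let_def)

declare block_start.simps(2)[simp del]

lemma dwell_w_ge: "Suc j * (block_start j + M j) \<le> dwell_w j"
  using k_pos[of j] by (simp add: dwell_w_def)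

lemma dwell_w_pos: "0 < dwell_w j"
  using k_pos[of j] M_pos[of j] by (simp add: dwell_w_def)

lemma dwell_z_ge: "Suc j * (block_start j + 2 * M j + dwell_w j) \<le> dwell_z j"
  using k_pos[of j] by (simp add: dwell_z_def)

lemma k_dvd_block_len: "k j dvd block_len j"
  using k_dvd_M[of j] by (simp add: block_len_def dwell_w_def dwell_z_def)

lemma strict_mono_block_start: "strict_mono block_start"
  using M_pos by (intro strict_monoI_Suc) (simp add: block_start_Suc block_len_def)

definition block :: "bool \<Rightarrow> nat \<Rightarrow> nat \<Rightarrow> 'a" where
  "block b j t =
     (if b \<and> t < M j then Zw j t
      else if b \<and> t < M j + dwell_w j then Y j (t mod k j)
      else if b \<and> t < 2 * M j + dwell_w j then Wz j (t - (M j + dwell_w j))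
      else X j (t mod k j))"

lemma block_0: "block b j 0 = z"
  using M_pos[of j] by (simp add: block_def cycles(3) connections(3))

lemma block_end: "block b j (block_len j) = z"
  using k_dvd_block_len[of j] by (simp add: block_def block_len_def cycles(3))

lemma block_in_CR: "block b j t \<in> chain_recurrent_set f"
proof -
  have "t mod k j \<le> k j" using k_pos[of j] by (simp add: order_less_imp_le)
  then show ?thesis
    using in_CR(1,2)[of "t mod k j" j] in_CR(3)[of t j] in_CR(4)[of "t - (M j + dwell_w j)" j]
    by (auto simp: block_def)
qed

lemma block_step:
  assumes "t < block_len j"
  shows "dist (f (block b j t)) (block b j (Suc t)) \<le> inverse (real (Suc j))"
proof -
  have X_step: "dist (f (X j (t mod k j))) (X j (Suc t mod k j)) \<le> inverse (real (Suc j))"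
    and Y_step: "dist (f (Y j (t mod k j))) (Y j (Suc t mod k j)) \<le> inverse (real (Suc j))"
    using cycle_step[OF cycles(1)] cycle_step[OF cycles(2)] by (simp_all add: cycles(3-6))
  have Zw_step: "t < M j \<Longrightarrow> dist (f (Zw j t)) (Zw j (Suc t)) \<le> inverse (real (Suc j))"
    and Wz_step: "t - (M j + dwell_w j) < M j \<Longrightarrow>
      dist (f (Wz j (t - (M j + dwell_w j)))) (Wz j (Suc (t - (M j + dwell_w j))))
        \<le> inverse (real (Suc j))"
    using connections(1,2) by (simp_all add: delta_chain_def)
  have dvd: "Suc t mod k j = 0"
    if "Suc t = M j \<or> Suc t = M j + dwell_w j \<or> Suc t = 2 * M j + dwell_w j"
    using that k_dvd_M[of j] by (auto simp: dwell_w_def)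
  show ?thesis
  proof (cases b)
    case True
    consider "Suc t < M j" | "Suc t = M j" | "M j \<le> t" "Suc t < M j + dwell_w j"
      | "Suc t = M j + dwell_w j" | "M j + dwell_w j \<le> t" "Suc t < 2 * M j + dwell_w j"
      | "Suc t = 2 * M j + dwell_w j" | "2 * M j + dwell_w j \<le> t"
      by linarith
    then show ?thesis
    proof cases
      case 1
      then show ?thesis using True Zw_step by (simp add: block_def)
    next
      case 2
      then show ?thesis using True Zw_step dvd dwell_w_pos[of j]
        by (simp add: block_def connections(4) cycles(5))
    next
      case 3
      then show ?thesis using True Y_step by (simp add: block_def)
    next
      case 4
      then show ?thesis using True Y_step dvd M_pos[of j] dwell_w_pos[of j]
        by (simp add: block_def cycles(5) connections(5))
    next
      case 5
      then show ?thesis using True Wz_step by (simp add: block_def Suc_diff_le)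
    next
      case 6
      then have "t - (M j + dwell_w j) < M j" "Suc (t - (M j + dwell_w j)) = M j"
        using M_pos[of j] by auto
      then show ?thesis using True 6 Wz_step dvd
        by (simp add: block_def connections(6) cycles(3))
    next
      case 7
      then show ?thesis using True X_step by (simp add: block_def)
    qed
  qed (use X_step in \<open>simp add: block_def\<close>)
qed

lemma block_agree: "2 * M j + dwell_w j \<le> t \<Longrightarrow> block b j t = block b' j t"
  by (simp add: block_def)

lemma block_apart:
  assumes "M j \<le> t" "t < M j + dwell_w j"
  shows "r < dist (block True j t) (block False j t)"
proof -
  have "t mod k j \<le> k j" using k_pos[of j] by (simp add: order_less_imp_le)
  then show ?thesis using assms cycles_apart by (simp add: block_def dist_commute)
qed

text \<open>Block j encodes bit n of s for every j = prod_encode (n, _), so each bit is used in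
  infinitely many blocks.\<close>
definition repeat_bits :: "(nat \<Rightarrow> bool) \<Rightarrow> nat \<Rightarrow> bool" where
  "repeat_bits s j = s (fst (prod_decode j))"

definition coded_orbit :: "(nat \<Rightarrow> bool) \<Rightarrow> nat \<Rightarrow> 'a" where
  "coded_orbit s = concat_segments block_start (\<lambda>j. block (repeat_bits s j) j)"

lemma coded_orbit_at:
  "t < block_len j \<Longrightarrow> coded_orbit s (block_start j + t) = block (repeat_bits s j) j t"
  unfolding coded_orbit_def
  by (rule concat_segments_at[OF strict_mono_block_start]) (simp add: block_start_Suc)

lemma coded_orbit_in_CR: "coded_orbit s i \<in> chain_recurrent_set f"
  by (simp add: coded_orbit_def concat_segments_def block_in_CR)

lemma coded_orbit_pseudo_orbit:
  "(\<lambda>i. dist (f (coded_orbit s i)) (coded_orbit s (Suc i))) \<longlonglongrightarrow> 0"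
  unfolding coded_orbit_def
proof (rule concat_segments_pseudo_orbit[OF strict_mono_block_start])
  show "dist (f (block (repeat_bits s j) j t)) (block (repeat_bits s j) j (Suc t))
      \<le> inverse (real (Suc j))" if "t < block_start (Suc j) - block_start j" for j t
    using that block_step by (simp add: block_start_Suc)
qed (use LIMSEQ_inverse_real_of_nat in \<open>simp_all add: block_start_Suc block_0 block_end\<close>)

lemma coded_orbits_coincide_often:
  "upper_density_one (\<lambda>i. coded_orbit s i = coded_orbit s' i)"
proof (rule upper_density_oneI_intervals)
  fix N
  define m where "m = block_start N + 2 * M N + dwell_w N"
  define n where "n = block_start (Suc N)"
  have "N \<le> n"
    using strict_mono_imp_increasing[OF strict_mono_block_start, of "Suc N"] by (simp add: n_def)
  moreover have "N * m \<le> n"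
    using dwell_z_ge[of N] by (simp add: m_def n_def block_start_Suc block_len_def)
  moreover have "coded_orbit s i = coded_orbit s' i" if "m \<le> i" "i < n" for i
  proof -
    have "i - block_start N < block_len N" "2 * M N + dwell_w N \<le> i - block_start N"
      using that by (auto simp: m_def n_def block_start_Suc)
    then show ?thesis
      using coded_orbit_at[of "i - block_start N" N] that block_agree
      by (simp add: m_def)
  qed
  ultimately show "\<exists>m n. N \<le> n \<and> N * m \<le> n \<and>
      (\<forall>i. m \<le> i \<and> i < n \<longrightarrow> coded_orbit s i = coded_orbit s' i)"
    by blast
qed

lemma coded_orbits_apart_often:
  assumes "s \<noteq> s'"
  shows "upper_density_one (\<lambda>i. r < dist (coded_orbit s i) (coded_orbit s' i))"
proof (rule upper_density_oneI_intervals)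
  fix N
  obtain l where "s l \<noteq> s' l" using assms by blast
  define j where "j = prod_encode (l, N)"
  have bits: "repeat_bits s j \<noteq> repeat_bits s' j"
    using \<open>s l \<noteq> s' l\<close> by (simp add: repeat_bits_def j_def)
  have "N \<le> j" unfolding j_def by (rule le_prod_encode_2)
  define m where "m = block_start j + M j"
  define n where "n = m + dwell_w j"
  have "Suc j * m \<le> n" using dwell_w_ge[of j] by (simp add: m_def n_def)
  moreover have "1 \<le> m" using M_pos[of j] by (simp add: m_def)
  moreover have "N * m \<le> Suc j * m" using \<open>N \<le> j\<close> by (intro mult_le_mono1) simp
  moreover have "Suc j \<le> Suc j * m" using mult_le_mono2[OF \<open>1 \<le> m\<close>, of "Suc j"] by simp
  ultimately have "N \<le> n" "N * m \<le> n" using \<open>N \<le> j\<close> by linarith+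
  moreover have "r < dist (coded_orbit s i) (coded_orbit s' i)" if "m \<le> i" "i < n" for i
  proof -
    have t: "i - block_start j < block_len j" "M j \<le> i - block_start j"
      "i - block_start j < M j + dwell_w j"
      using that by (auto simp: m_def n_def block_len_def)
    have "i = block_start j + (i - block_start j)" using that by (simp add: m_def)
    then show ?thesis
      using coded_orbit_at[OF t(1), of s] coded_orbit_at[OF t(1), of s'] block_apart[OF t(2,3)]
        bits
      by (cases "repeat_bits s j") (auto simp: dist_commute)
  qed
  ultimately show "\<exists>m n. N \<le> n \<and> N * m \<le> n \<and>
      (\<forall>i. m \<le> i \<and> i < n \<longrightarrow> r < dist (coded_orbit s i) (coded_orbit s' i))"
    by blast
qed

lemma DC1_pair_of_shadows:
  assumes shadow: "(\<lambda>n. (\<Sum>i<n. dist ((f^^i) a) (coded_orbit s i)) / real n) \<longlonglongrightarrow> 0"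
    and shadow': "(\<lambda>n. (\<Sum>i<n. dist ((f^^i) a') (coded_orbit s' i)) / real n) \<longlonglongrightarrow> 0"
    and "s \<noteq> s'"
  shows "DC1_pair f a a'" "a \<noteq> a'"
proof -
  define e where
    "e i = dist ((f^^i) a) (coded_orbit s i) + dist ((f^^i) a') (coded_orbit s' i)" for i
  have e_nonneg: "e i \<ge> 0" for i by (simp add: e_def)
  have e_cesaro: "(\<lambda>n. (\<Sum>i<n. e i) / real n) \<longlonglongrightarrow> 0"
    using tendsto_add[OF shadow shadow'] by (simp add: e_def sum.distrib add_divide_distrib)
  have close: "upper_density_one (\<lambda>i. dist ((f^^i) a) ((f^^i) a') < \<delta>)" if "\<delta> > 0" for \<delta>
  proof (rule upper_density_one_transfer[OF coded_orbits_coincide_often e_nonneg e_cesaro that])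
    fix i assume "coded_orbit s i = coded_orbit s' i" "e i < \<delta>"
    then show "dist ((f^^i) a) ((f^^i) a') < \<delta>"
      using dist_triangle[of "(f^^i) a" "(f^^i) a'" "coded_orbit s i"]
      by (simp add: e_def dist_commute)
  qed
  have "r/2 > 0" using r_pos by simp
  have apart: "upper_density_one (\<lambda>i. r/2 < dist ((f^^i) a) ((f^^i) a'))"
  proof (rule upper_density_one_transfer[OF coded_orbits_apart_often[OF \<open>s \<noteq> s'\<close>]
        e_nonneg e_cesaro \<open>r/2 > 0\<close>])
    fix i assume "r < dist (coded_orbit s i) (coded_orbit s' i)" "e i < r/2"
    then show "r/2 < dist ((f^^i) a) ((f^^i) a')"
      using dist_triangle[of "coded_orbit s i" "coded_orbit s' i" "(f^^i) a"]
        dist_triangle[of "(f^^i) a" "coded_orbit s' i" "(f^^i) a'"]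
      by (simp add: e_def dist_commute)
  qed
  show "DC1_pair f a a'"
    unfolding DC1_pair_def using limsup_density_eq_1[OF close] limsup_density_eq_1[OF apart]
      \<open>r/2 > 0\<close> by blast
  from apart obtain i where "r/2 < dist ((f^^i) a) ((f^^i) a')"
    by (rule upper_density_oneE)
  then show "a \<noteq> a'" using r_pos by auto
qed

lemma exhibits_DC1_if_shadowing:
  assumes "\<forall>xs. (\<forall>i. xs i \<in> chain_recurrent_set f) \<and>
               (\<lambda>i. dist (f (xs i)) (xs (Suc i))) \<longlonglongrightarrow> 0 \<longrightarrow>
             (\<exists>x. (\<lambda>n. (\<Sum>i<n. dist ((f^^i) x) (xs i)) / real n) \<longlonglongrightarrow> 0)"
  shows "exhibits_DC1 f"
proof -
  have "\<exists>x. (\<lambda>n. (\<Sum>i<n. dist ((f^^i) x) (coded_orbit s i)) / real n) \<longlonglongrightarrow> 0" for s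
    using assms coded_orbit_in_CR coded_orbit_pseudo_orbit by blast
  then obtain x where
    x: "\<And>s. (\<lambda>n. (\<Sum>i<n. dist ((f^^i) (x s)) (coded_orbit s i)) / real n) \<longlonglongrightarrow> 0"
    by metis
  have "inj x" using DC1_pair_of_shadows(2)[OF x x] by (auto intro: injI)
  then have "uncountable (range x)"
    using uncountable_UNIV_nat_bool countable_image_inj_on by blast
  moreover have "DC1_pair f a b" if "a \<in> range x" "b \<in> range x" "a \<noteq> b" for a b
    using that DC1_pair_of_shadows(1)[OF x x] by (metis rangeE)
  ultimately show ?thesis unfolding exhibits_DC1_def by blast
qed

end

lemma coding_data_exists:
  fixes f :: "'a::metric_space \<Rightarrow> 'a"
  assumes "CR_rel f z w" "property_star f z w"
  obtains r k M X Y Zw Wz where "coding_data f z w r k M X Y Zw Wz"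
proof -
  let ?CR = "chain_recurrent_set f"
  define \<delta> :: "nat \<Rightarrow> real" where "\<delta> j = inverse (real (Suc j))" for j
  have \<delta>_pos: "\<delta> j > 0" for j by (simp add: \<delta>_def)
  obtain r where "r > 0" and "\<forall>\<delta>>0. \<exists>k xs ys.
      delta_chain f \<delta> xs k \<and> delta_chain f \<delta> ys k \<and> (\<forall>i\<le>k. xs i \<in> ?CR \<and> ys i \<in> ?CR) \<and>
      xs 0 = z \<and> xs k = z \<and> ys 0 = w \<and> ys k = w \<and> (\<forall>i\<le>k. r < dist (xs i) (ys i))"
    (is "\<forall>\<delta>>0. \<exists>k xs ys. ?cycles \<delta> k xs ys")
    using assms(2) unfolding property_star_def by blast
  then have "\<forall>j. \<exists>k xs ys. ?cycles (\<delta> j) k xs ys" using \<delta>_pos by blast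
  then obtain k X Y where cycles: "\<And>j. ?cycles (\<delta> j) (k j) (X j) (Y j)" by metis
  have "\<forall>\<delta>>0. \<exists>m>0. \<exists>N>0. \<forall>n\<ge>N. \<exists>xs ys.
      delta_chain f \<delta> xs (m * n) \<and> delta_chain f \<delta> ys (m * n) \<and>
      (\<forall>i\<le>m * n. xs i \<in> ?CR \<and> ys i \<in> ?CR) \<and>
      xs 0 = z \<and> xs (m * n) = w \<and> ys 0 = w \<and> ys (m * n) = z"
    (is "\<forall>\<delta>>0. \<exists>m>0. \<exists>N>0. \<forall>n\<ge>N. \<exists>xs ys. ?connections \<delta> (m * n) xs ys")
    using assms(1) unfolding CR_rel_def by blast
  then have "\<forall>j. \<exists>m>0. \<exists>N>0. \<forall>n\<ge>N. \<exists>xs ys. ?connections (\<delta> j) (m * n) xs ys"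
    using \<delta>_pos by blast
  then obtain m N where "\<And>j. m j > 0 \<and> N j > 0 \<and>
      (\<forall>n\<ge>N j. \<exists>xs ys. ?connections (\<delta> j) (m j * n) xs ys)"
    by metis
  \<comment> \<open>Chains of length m j * n with n = k j * N j have a length divisible by k j.\<close>
  moreover have "N j \<le> k j * N j" for j
    using cycles[of j] by (simp add: delta_chain_def)
  ultimately have "\<forall>j. \<exists>xs ys. ?connections (\<delta> j) (m j * (k j * N j)) xs ys" by blast
  then obtain Zw Wz
    where connections: "\<And>j. ?connections (\<delta> j) (m j * (k j * N j)) (Zw j) (Wz j)"
    by metis
  have "coding_data f z w r k (\<lambda>j. m j * (k j * N j)) X Y Zw Wz"
    by unfold_locales (use \<open>r > 0\<close> cycles connections in \<open>simp_all add: \<delta>_def\<close>)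
  then show thesis by (rule that)
qed

theorem lemma4p1:
  fixes f :: "'a::metric_space \<Rightarrow> 'a"
  assumes "compact (UNIV :: 'a set)"
    and "continuous_on UNIV f"
    and "\<exists>z w. z \<in> chain_recurrent_set f \<and> w \<in> chain_recurrent_set f \<and>
               CR_rel f z w \<and> property_star f z w"
    and "\<forall>xs. (\<forall>i. xs i \<in> chain_recurrent_set f) \<and>
               (\<lambda>i. dist (f (xs i)) (xs (Suc i))) \<longlonglongrightarrow> 0 \<longrightarrow>
             (\<exists>x. (\<lambda>n. (\<Sum>i<n. dist ((f^^i) x) (xs i)) / real n) \<longlonglongrightarrow> 0)"
  shows "exhibits_DC1 f"
proof -
  obtain z w where "CR_rel f z w" "property_star f z w" using assms(3) by blast
  then obtain r k M X Y Zw Wz where "coding_data f z w r k M X Y Zw Wz"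
    by (rule coding_data_exists)
  then interpret coding_data f z w r k M X Y Zw Wz .
  show ?thesis using assms(4) by (rule exhibits_DC1_if_shadowing)
qed

end
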